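(* Let $c\ge1$, $d,n\in\mathbb N$ and $A_1,\dots,A_n\in\mathcal T_c(d)$. Then for all $1\le j\le i\le d$, $$|(A_1\cdots A_n)_{ij}|\le(cn)^{i-j}|(A_1\cdots A_n)_{jj}|.$$
   Context: $\mathcal T_c(d)$ denotes the set of real $d\times d$ lower triangular matrices $A=(a_{ij})$ such that (i) $|a_{11}|\ge|a_{22}|\ge\dots\ge|a_{dd}|>0$ and (ii) $|a_{ij}|\le c|a_{jj}|$ for all $1\le i,j\le d$. *)

theory Defs
  imports "Jordan_Normal_Form.Matrix"
begin

text \<open>Matrices are d x d real matrices (Jordan_Normal_Form), indices 0-based:
  entry (i,j) with i,j < d corresponds to a_{(i+1)(j+1)} in the paper.\<close>

definition Tc :: "real \<Rightarrow> nat \<Rightarrow> real mat set" where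
  "Tc c d = {A \<in> carrier_mat d d.
     (\<forall>i<d. \<forall>j<d. i < j \<longrightarrow> A $$ (i,j) = 0) \<and>
     (\<forall>i. Suc i < d \<longrightarrow> \<bar>A $$ (i,i)\<bar> \<ge> \<bar>A $$ (Suc i, Suc i)\<bar>) \<and>
     (0 < d \<longrightarrow> \<bar>A $$ (d-1, d-1)\<bar> > 0) \<and>
     (\<forall>i<d. \<forall>j<d. \<bar>A $$ (i,j)\<bar> \<le> c * \<bar>A $$ (j,j)\<bar>)}"

definition mat_prod_list :: "nat \<Rightarrow> real mat list \<Rightarrow> real mat" where
  "mat_prod_list d As = foldr (\<lambda>A B. A * B) As (1\<^sub>m d)"

end

theory Submission
  imports Defs
begin

text \<open>Induction on the number of factors. Write the product as \<open>A Q\<close> with \<open>A \<in> T\<^sub>c(d)\<close> and \<open>Q\<close>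
  a product of \<open>n\<close> factors with \<open>|Q(k,j)| \<le> (cn)^(k-j) |Q(j,j)|\<close>. By triangularity \<open>(AQ)(i,j)\<close>
  is the sum of \<open>A(i,k) Q(k,j)\<close> over \<open>j \<le> k \<le> i\<close>, and \<open>(AQ)(j,j) = A(j,j) Q(j,j)\<close>. As the
  diagonal of \<open>A\<close> decreases in modulus, \<open>|A(i,i)| \<le> |A(j,j)|\<close> and \<open>|A(i,k)| \<le> c |A(j,j)|\<close>,
  so with \<open>m = i - j\<close> we get \<open>|(AQ)(i,j)| \<le> ((cn)^m + c \<Sum>\<^sub>t\<^sub><\<^sub>m (cn)^t) |(AQ)(j,j)|\<close>, and the
  factor is at most \<open>(c(n+1))^m\<close>.\<close>

definition lower_triangular :: "'a::zero mat \<Rightarrow> bool" where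
  "lower_triangular A \<longleftrightarrow> (\<forall>i<dim_row A. \<forall>j<dim_col A. i < j \<longrightarrow> A $$ (i,j) = 0)"

definition subdiagonal_bounded :: "real \<Rightarrow> real mat \<Rightarrow> bool" where
  "subdiagonal_bounded r Q \<longleftrightarrow>
     (\<forall>i j. j \<le> i \<longrightarrow> i < dim_row Q \<longrightarrow> \<bar>Q $$ (i,j)\<bar> \<le> r ^ (i - j) * \<bar>Q $$ (j,j)\<bar>)"

lemma power_plus_geometric_sum_le:
  fixes n :: real
  assumes "n \<ge> 0"
  shows "n ^ m + (\<Sum>t<m. n ^ t) \<le> (n + 1) ^ m"
proof (induction m)
  case 0
  then show ?case by simp
next
  case (Suc m)
  have "(n + 1) ^ Suc m \<ge> (n + 1) * (n ^ m + (\<Sum>t<m. n ^ t))"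
    using Suc assms by (simp add: mult_left_mono)
  moreover have "n * (\<Sum>t<m. n ^ t) \<ge> 0"
    using assms by (simp add: sum_nonneg)
  ultimately show ?case
    by (simp add: algebra_simps)
qed

lemma power_plus_scaled_geometric_sum_le:
  fixes c n :: real
  assumes "c \<ge> 1" and "n \<ge> 0"
  shows "(c * n) ^ m + c * (\<Sum>t<m. (c * n) ^ t) \<le> (c * (n + 1)) ^ m"
proof -
  have "c * (c * n) ^ t \<le> c ^ m * n ^ t" if "t < m" for t
  proof -
    have "c * c ^ t \<le> c ^ m"
      using power_increasing[of "Suc t" m c] assms(1) that by simp
    then show ?thesis
      using assms by (simp add: power_mult_distrib mult_right_mono flip: mult.assoc)
  qed
  then have "c * (\<Sum>t<m. (c * n) ^ t) \<le> c ^ m * (\<Sum>t<m. n ^ t)"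
    by (auto simp: sum_distrib_left intro: sum_mono)
  also have "(c * n) ^ m + c ^ m * (\<Sum>t<m. n ^ t) = c ^ m * (n ^ m + (\<Sum>t<m. n ^ t))"
    by (simp add: power_mult_distrib algebra_simps)
  also have "\<dots> \<le> c ^ m * (n + 1) ^ m"
    using power_plus_geometric_sum_le[OF assms(2)] assms(1) by simp
  finally show ?thesis
    by (simp add: power_mult_distrib)
qed

lemma lower_triangular_mult:
  fixes A B :: "'a::semiring_0 mat"
  assumes "A \<in> carrier_mat d d" "B \<in> carrier_mat d d"
    and "lower_triangular A" "lower_triangular B"
  shows "lower_triangular (A * B)"
  unfolding lower_triangular_def
proof (intro allI impI)
  fix i j assume ij: "i < dim_row (A * B)" "j < dim_col (A * B)" "i < j"
  have "A $$ (i,k) * B $$ (k,j) = 0" if "k < d" for k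
    using assms ij that unfolding lower_triangular_def by (cases "i < k") auto
  then show "(A * B) $$ (i,j) = 0"
    using assms(1,2) ij by (simp add: index_mult_mat scalar_prod_def)
qed

lemma lower_triangular_mult_entry:
  fixes A B :: "'a::semiring_0 mat"
  assumes "A \<in> carrier_mat d d" "B \<in> carrier_mat d d"
    and "lower_triangular A" "lower_triangular B"
    and "j \<le> i" "i < d"
  shows "(A * B) $$ (i,j) = (\<Sum>k\<in>{j..i}. A $$ (i,k) * B $$ (k,j))"
proof -
  have "(A * B) $$ (i,j) = (\<Sum>k\<in>{..<d}. A $$ (i,k) * B $$ (k,j))"
    using assms by (simp add: index_mult_mat scalar_prod_def lessThan_atLeast0)
  also have "\<dots> = (\<Sum>k\<in>{j..i}. A $$ (i,k) * B $$ (k,j))"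
  proof (rule sum.mono_neutral_right)
    show "\<forall>k\<in>{..<d} - {j..i}. A $$ (i,k) * B $$ (k,j) = 0"
      using assms unfolding lower_triangular_def by (auto simp: not_le)
  qed (use assms in auto)
  finally show ?thesis .
qed

lemma Tc_lower_triangular: "A \<in> Tc c d \<Longrightarrow> A \<in> carrier_mat d d \<and> lower_triangular A"
  unfolding Tc_def lower_triangular_def by auto

lemma Tc_diag_antimono:
  assumes "A \<in> Tc c d" "j \<le> k" "k < d"
  shows "\<bar>A $$ (k,k)\<bar> \<le> \<bar>A $$ (j,j)\<bar>"
  using assms(2,3)
proof (induction k rule: dec_induct)
  case base
  then show ?case by simp
next
  case (step k)
  then show ?case
    using assms(1) unfolding Tc_def by (auto intro: order_trans)
qed

lemma Tc_entry_le_diag: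
  assumes "A \<in> Tc c d" "c \<ge> 1" "j \<le> k" "k < d" "i < d"
  shows "\<bar>A $$ (i,k)\<bar> \<le> c * \<bar>A $$ (j,j)\<bar>"
proof -
  have "\<bar>A $$ (i,k)\<bar> \<le> c * \<bar>A $$ (k,k)\<bar>"
    using assms unfolding Tc_def by auto
  also have "\<dots> \<le> c * \<bar>A $$ (j,j)\<bar>"
    using Tc_diag_antimono[OF assms(1,3,4)] assms(2) by simp
  finally show ?thesis .
qed

lemma Tc_mult_subdiagonal_bounded:
  assumes A: "A \<in> Tc c d" and c: "c \<ge> 1" and n: "n \<ge> 0"
    and Q: "Q \<in> carrier_mat d d" "lower_triangular Q" and bounded: "subdiagonal_bounded (c * n) Q"
  shows "subdiagonal_bounded (c * (n + 1)) (A * Q)"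
  unfolding subdiagonal_bounded_def
proof (intro allI impI)
  fix i j assume ji: "j \<le> i" "i < dim_row (A * Q)"
  have Ad: "A \<in> carrier_mat d d" "lower_triangular A"
    using Tc_lower_triangular[OF A] by auto
  then have "i < d"
    using ji by simp
  define m where "m = i - j"
  let ?a = "\<bar>A $$ (j,j)\<bar>" and ?q = "\<bar>Q $$ (j,j)\<bar>"
  have Q_le: "\<bar>Q $$ (k,j)\<bar> \<le> (c * n) ^ (k - j) * ?q" if "j \<le> k" "k < d" for k
    using bounded that Q(1) unfolding subdiagonal_bounded_def by simp
  have "\<bar>(A * Q) $$ (i,j)\<bar> \<le> (\<Sum>k\<in>{j..i}. \<bar>A $$ (i,k)\<bar> * \<bar>Q $$ (k,j)\<bar>)"
    unfolding lower_triangular_mult_entry[OF Ad(1) Q(1) Ad(2) Q(2) ji(1) \<open>i < d\<close>]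
    by (rule order_trans[OF sum_abs]) (simp add: abs_mult)
  also have "\<dots> = \<bar>A $$ (i,i)\<bar> * \<bar>Q $$ (i,j)\<bar> + (\<Sum>k\<in>{j..<i}. \<bar>A $$ (i,k)\<bar> * \<bar>Q $$ (k,j)\<bar>)"
    using ji(1) by (simp add: atLeastLessThanSuc_atLeastAtMost[symmetric] add.commute)
  also have "\<dots> \<le> ?a * ((c * n) ^ m * ?q) + (\<Sum>k\<in>{j..<i}. c * ?a * ((c * n) ^ (k - j) * ?q))"
  proof (intro add_mono sum_mono)
    show "\<bar>A $$ (i,i)\<bar> * \<bar>Q $$ (i,j)\<bar> \<le> ?a * ((c * n) ^ m * ?q)"
      unfolding m_def using Tc_diag_antimono[OF A ji(1) \<open>i < d\<close>] Q_le[OF ji(1) \<open>i < d\<close>]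
      by (intro mult_mono) auto
    show "\<bar>A $$ (i,k)\<bar> * \<bar>Q $$ (k,j)\<bar> \<le> c * ?a * ((c * n) ^ (k - j) * ?q)"
      if "k \<in> {j..<i}" for k
      using Tc_entry_le_diag[OF A c _ _ \<open>i < d\<close>, of j k] Q_le[of k] that \<open>i < d\<close>
      by (intro mult_mono) auto
  qed
  also have "(\<Sum>k\<in>{j..<i}. c * ?a * ((c * n) ^ (k - j) * ?q)) = c * (\<Sum>t<m. (c * n) ^ t) * (?a * ?q)"
    unfolding m_def sum.atLeastLessThan_shift_0[of _ j i]
    by (simp add: atLeast0LessThan sum_distrib_left sum_distrib_right algebra_simps)
  also have "?a * ((c * n) ^ m * ?q) + \<dots> = ((c * n) ^ m + c * (\<Sum>t<m. (c * n) ^ t)) * (?a * ?q)"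
    by (simp add: algebra_simps)
  also have "\<dots> \<le> (c * (n + 1)) ^ m * (?a * ?q)"
    using power_plus_scaled_geometric_sum_le[OF c n] by (simp add: mult_right_mono)
  also have "?a * ?q = \<bar>(A * Q) $$ (j,j)\<bar>"
    using lower_triangular_mult_entry[OF Ad(1) Q(1) Ad(2) Q(2) order_refl] ji \<open>i < d\<close>
    by (simp add: abs_mult)
  finally show "\<bar>(A * Q) $$ (i,j)\<bar> \<le> (c * (n + 1)) ^ (i - j) * \<bar>(A * Q) $$ (j,j)\<bar>"
    unfolding m_def .
qed

lemma mat_prod_list_Tc:
  assumes "c \<ge> 1" and "\<forall>A \<in> set As. A \<in> Tc c d"
  shows "mat_prod_list d As \<in> carrier_mat d d \<and> lower_triangular (mat_prod_list d As)
    \<and> subdiagonal_bounded (c * real (length As)) (mat_prod_list d As)"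
  using assms(2)
proof (induction As)
  case Nil
  have "subdiagonal_bounded 0 (1\<^sub>m d :: real mat)"
    unfolding subdiagonal_bounded_def by (auto simp: le_less)
  then show ?case
    by (simp add: mat_prod_list_def lower_triangular_def)
next
  case (Cons A As)
  let ?Q = "mat_prod_list d As"
  have A: "A \<in> Tc c d" and Q: "?Q \<in> carrier_mat d d" "lower_triangular ?Q"
    and bounded: "subdiagonal_bounded (c * real (length As)) ?Q"
    using Cons by auto
  have "mat_prod_list d (A # As) = A * ?Q"
    by (simp add: mat_prod_list_def)
  moreover have "A * ?Q \<in> carrier_mat d d" "lower_triangular (A * ?Q)"
    using Tc_lower_triangular[OF A] Q lower_triangular_mult[of A d ?Q] by auto
  moreover have "subdiagonal_bounded (c * (real (length As) + 1)) (A * ?Q)"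
    using Tc_mult_subdiagonal_bounded[OF A assms(1) _ Q bounded] by simp
  ultimately show ?case
    by (simp add: add.commute)
qed

theorem lemma4p4:
  fixes c :: real and d :: nat and As :: "real mat list"
  assumes "c \<ge> 1"
    and "\<forall>A \<in> set As. A \<in> Tc c d"
    and "j \<le> i" and "i < d"
  shows "\<bar>mat_prod_list d As $$ (i,j)\<bar>
           \<le> (c * real (length As)) ^ (i - j) * \<bar>mat_prod_list d As $$ (j,j)\<bar>"
  using mat_prod_list_Tc[OF assms(1,2)] assms(3,4)
  unfolding subdiagonal_bounded_def by auto

end
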